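(* Let $q$ be a prime and $k\in\mathbb{N}$. There is a positive constant $m'_{q,k}$ depending only on $q$ and $k$ such that for every $N\in\mathbb{N}$, the number of $k$-element subsets of $[N]^{\times}=\{\pm p_1^{e_1}p_2^{e_2}\cdots p_N^{e_N}: 0\le e_1,\ldots,e_N\le N\}$ that contain at least one perfect $q^{th}$ power is at most $m'_{q,k}\frac{N^{Nk}}{q^N}$.
   Context: $p_1<p_2<\cdots$ denote the primes in increasing order. A perfect $q^{th}$ power is an integer of the form $m^q$ with $m\in\mathbb{Z}$. *)

theory Defs
  imports Complex_Main "HOL-Computational_Algebra.Primes" "HOL-Library.Infinite_Set"
begin

text \<open>The i-th prime, 0-indexed: nth_prime 0 = 2, i.e. p_{i+1} = nth_prime i.\<close>
definition nth_prime :: "nat \<Rightarrow> nat" where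
  "nth_prime i = enumerate {p::nat. prime p} i"

definition mult_box :: "nat \<Rightarrow> int set" where
  "mult_box N = {s * int (\<Prod>i<N. nth_prime i ^ e i) | s e.
      s \<in> {1, -1} \<and> (\<forall>i<N. e i \<le> N)}"

definition perfect_power :: "nat \<Rightarrow> int \<Rightarrow> bool" where
  "perfect_power q x \<longleftrightarrow> (\<exists>m::int. x = m ^ q)"

end

theory Submission
  imports Defs "HOL-Library.FuncSet"
begin

text \<open>A perfect \<open>q\<close>-th power in \<open>[N]\<^sup>\<times>\<close> has all its exponents divisible by \<open>q\<close>, so there are
  at most \<open>2 (N/q + 1)\<^sup>N \<le> 2 e\<^sup>q (N/q)\<^sup>N\<close> of them, while \<open>[N]\<^sup>\<times>\<close> itself has at most
  \<open>2 (N + 1)\<^sup>N \<le> 2 e N\<^sup>N\<close> elements. A \<open>k\<close>-subset containing a perfect power is obtained by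
  inserting such a power into a \<open>(k-1)\<close>-subset of \<open>[N]\<^sup>\<times>\<close>, which gives the bound.\<close>

lemma prime_nth_prime: "prime (nth_prime i)"
  unfolding nth_prime_def using enumerate_in_set[OF primes_infinite] by auto

lemma inj_nth_prime: "inj nth_prime"
  unfolding nth_prime_def using inj_enumerate[OF primes_infinite] by simp

lemma nth_prime_pos: "nth_prime i > 0"
  using prime_nth_prime prime_gt_0_nat by blast

lemma prod_nth_prime_power_nonzero: "(\<Prod>j<n. nth_prime j ^ e j) \<noteq> 0"
  using nth_prime_pos by (simp add: prod_zero_iff)

lemma multiplicity_prod_nth_prime_power:
  "multiplicity (nth_prime i) (\<Prod>j<n. nth_prime j ^ e j) = (if i < n then e i else 0)"
proof (induction n)
  case 0
  then show ?case using prime_nth_prime[of i] by (simp add: multiplicity_unit_right)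
next
  case (Suc n)
  have prime_i: "prime_elem (nth_prime i)"
    using prime_nth_prime by blast
  have "multiplicity (nth_prime i) (nth_prime n ^ e n) = (if i = n then e n else 0)"
  proof (cases "i = n")
    case False
    then have "nth_prime i \<noteq> nth_prime n"
      using inj_nth_prime by (meson injD)
    then show ?thesis
      using False prime_nth_prime[of i] prime_nth_prime[of n] nth_prime_pos[of n]
      by (simp add: prime_elem_multiplicity_power_distrib prime_multiplicity_other)
  qed (use prime_nth_prime[of n] in simp)
  moreover have "nth_prime n ^ e n \<noteq> 0"
    using nth_prime_pos[of n] by simp
  ultimately show ?case
    using Suc prime_elem_multiplicity_mult_distrib[OF prime_i prod_nth_prime_power_nonzero]
    by auto
qed

lemma perfect_power_imp_dvd_exponent:
  assumes "perfect_power q (s * int (\<Prod>j<N. nth_prime j ^ e j))" "s \<in> {1, -1}" "i < N"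
  shows "q dvd e i"
proof -
  define P where "P = (\<Prod>j<N. nth_prime j ^ e j)"
  obtain m where m: "s * int P = m ^ q"
    using assms(1) unfolding perfect_power_def P_def by blast
  have "int P = \<bar>m\<bar> ^ q"
    using arg_cong[OF m, of abs] assms(2) by (auto simp: power_abs)
  then have P_eq: "P = nat \<bar>m\<bar> ^ q"
    by (metis abs_ge_zero int_nat_eq nat_int nat_power_eq)
  have "e i = multiplicity (nth_prime i) P"
    unfolding P_def using multiplicity_prod_nth_prime_power assms(3) by simp
  also have "\<dots> = q * multiplicity (nth_prime i) (nat \<bar>m\<bar>)"
  proof (cases "q = 0")
    case False
    have "P \<noteq> 0"
      unfolding P_def by (rule prod_nth_prime_power_nonzero)
    then have "nat \<bar>m\<bar> \<noteq> 0"
      using P_eq False by auto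
    then show ?thesis
      unfolding P_eq using prime_nth_prime
      by (simp add: prime_elem_multiplicity_power_distrib)
  qed (simp add: P_eq)
  finally show ?thesis by simp
qed

definition signed_prime_products :: "nat \<Rightarrow> nat set \<Rightarrow> int set" where
  "signed_prime_products N E = {s * int (\<Prod>i<N. nth_prime i ^ e i) | s e.
      s \<in> {1, -1} \<and> (\<forall>i<N. e i \<in> E)}"

lemma mult_box_eq_signed_prime_products: "mult_box N = signed_prime_products N {..N}"
  unfolding mult_box_def signed_prime_products_def by simp

lemma perfect_powers_in_mult_box_subset:
  "{x \<in> mult_box N. perfect_power q x} \<subseteq> signed_prime_products N {j \<in> {..N}. q dvd j}"
proof
  fix x assume "x \<in> {x \<in> mult_box N. perfect_power q x}"
  then obtain s e where x: "x = s * int (\<Prod>i<N. nth_prime i ^ e i)" "s \<in> {1, -1}"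
      "\<forall>i<N. e i \<le> N" "perfect_power q x"
    unfolding mult_box_def by blast
  then have "\<forall>i<N. e i \<in> {j \<in> {..N}. q dvd j}"
    using perfect_power_imp_dvd_exponent by auto
  with x show "x \<in> signed_prime_products N {j \<in> {..N}. q dvd j}"
    unfolding signed_prime_products_def by blast
qed

lemma signed_prime_products_subset_image:
  "signed_prime_products N E \<subseteq>
     (\<lambda>(s, e). s * int (\<Prod>i<N. nth_prime i ^ e i)) ` ({1, -1} \<times> PiE {..<N} (\<lambda>_. E))"
proof
  fix x assume "x \<in> signed_prime_products N E"
  then obtain s e where x: "x = s * int (\<Prod>i<N. nth_prime i ^ e i)" "s \<in> {1, -1}" "\<forall>i<N. e i \<in> E"
    unfolding signed_prime_products_def by blast
  have "x = (\<lambda>(s, e). s * int (\<Prod>i<N. nth_prime i ^ e i)) (s, restrict e {..<N})"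
    using x(1) by simp
  moreover have "(s, restrict e {..<N}) \<in> {1, -1} \<times> PiE {..<N} (\<lambda>_. E)"
    using x(2,3) by auto
  ultimately show "x \<in> (\<lambda>(s, e). s * int (\<Prod>i<N. nth_prime i ^ e i)) ` ({1, -1} \<times> PiE {..<N} (\<lambda>_. E))"
    by (rule image_eqI)
qed

lemma
  assumes "finite E"
  shows finite_signed_prime_products: "finite (signed_prime_products N E)"
    and card_signed_prime_products_le: "card (signed_prime_products N E) \<le> 2 * card E ^ N"
proof -
  let ?f = "\<lambda>(s, e). s * int (\<Prod>i<N. nth_prime i ^ e i)"
  have fin: "finite ({1, -1::int} \<times> PiE {..<N} (\<lambda>_. E))"
    using assms by (auto intro!: finite_PiE)
  then show "finite (signed_prime_products N E)"
    by (rule finite_subset[OF signed_prime_products_subset_image finite_imageI])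
  have "card (signed_prime_products N E) \<le> card (?f ` ({1, -1::int} \<times> PiE {..<N} (\<lambda>_. E)))"
    using fin by (intro card_mono finite_imageI signed_prime_products_subset_image)
  also have "\<dots> \<le> card ({1, -1::int} \<times> PiE {..<N} (\<lambda>_. E))"
    by (rule card_image_le[OF fin])
  also have "\<dots> = 2 * card E ^ N"
    by (simp add: card_cartesian_product card_PiE)
  finally show "card (signed_prime_products N E) \<le> 2 * card E ^ N" .
qed

lemma finite_mult_box: "finite (mult_box N)"
  by (simp add: mult_box_eq_signed_prime_products finite_signed_prime_products)

lemma multiples_atMost_eq_image:
  fixes q N :: nat
  assumes "q > 0"
  shows "{j \<in> {..N}. q dvd j} = (\<lambda>t. q * t) ` {..N div q}"
proof -
  have "q * t \<le> N \<longleftrightarrow> t \<le> N div q" for t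
    by (metis less_eq_div_iff_mult_less_eq[OF assms] mult.commute)
  then show ?thesis
    by (auto simp: image_iff elim!: dvdE)
qed

lemma card_multiples_atMost_le:
  fixes q N :: nat
  assumes "q > 0"
  shows "card {j \<in> {..N}. q dvd j} \<le> N div q + 1"
  using card_image_le[of "{..N div q}" "\<lambda>t. q * t"] multiples_atMost_eq_image[OF assms] by simp

lemma power_div_add_one_le_exp:
  fixes c :: real
  assumes "c > 0"
  shows "(real N / c + 1) ^ N \<le> exp c * (real N / c) ^ N"
proof (cases "N = 0")
  case False
  then have N_pos: "real N > 0" by simp
  have "(real N / c + 1) ^ N = (real N / c) ^ N * (1 + c / real N) ^ N"
    using N_pos assms by (simp add: field_simps flip: power_mult_distrib)
  also have "\<dots> \<le> (real N / c) ^ N * exp (c / real N) ^ N"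
    using assms N_pos by (intro mult_left_mono power_mono exp_ge_add_one_self) auto
  also have "exp (c / real N) ^ N = exp c"
    using N_pos by (simp flip: exp_of_nat_mult)
  finally show ?thesis
    by (simp add: mult.commute)
qed (use assms in simp)

lemma card_mult_box_le: "real (card (mult_box N)) \<le> 2 * exp 1 * real N ^ N"
proof -
  have "card (mult_box N) \<le> 2 * (N + 1) ^ N"
    using card_signed_prime_products_le[of "{..N}" N]
    by (simp add: mult_box_eq_signed_prime_products)
  then have "real (card (mult_box N)) \<le> real (2 * (N + 1) ^ N)"
    by (rule of_nat_mono)
  also have "\<dots> = 2 * (real N / 1 + 1) ^ N"
    by (simp add: add.commute)
  also have "\<dots> \<le> 2 * (exp 1 * (real N / 1) ^ N)"
    by (intro mult_left_mono power_div_add_one_le_exp) simp_all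
  finally show ?thesis
    by simp
qed

lemma card_perfect_powers_in_mult_box_le:
  assumes "q > 0"
  shows "real (card {x \<in> mult_box N. perfect_power q x}) \<le> 2 * exp (real q) * real N ^ N / real q ^ N"
proof -
  have "card {x \<in> mult_box N. perfect_power q x} \<le> card (signed_prime_products N {j \<in> {..N}. q dvd j})"
    by (intro card_mono finite_signed_prime_products perfect_powers_in_mult_box_subset) simp
  also have "\<dots> \<le> 2 * card {j \<in> {..N}. q dvd j} ^ N"
    by (rule card_signed_prime_products_le) simp
  also have "\<dots> \<le> 2 * (N div q + 1) ^ N"
    using card_multiples_atMost_le[OF assms] by (intro mult_le_mono2 power_mono) auto
  finally have "real (card {x \<in> mult_box N. perfect_power q x}) \<le> real (2 * (N div q + 1) ^ N)"
    by (rule of_nat_mono)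
  also have "\<dots> \<le> 2 * (real N / real q + 1) ^ N"
    using of_nat_div_le_of_nat[of N q, where 'a = real] by (simp add: add.commute power_mono)
  also have "\<dots> \<le> 2 * (exp (real q) * (real N / real q) ^ N)"
    using assms by (intro mult_left_mono power_div_add_one_le_exp) simp_all
  finally show ?thesis
    by (simp add: power_divide)
qed

lemma card_subsets_with_witness_le:
  assumes "finite B"
  shows "card {A. A \<subseteq> B \<and> card A = k \<and> (\<exists>x\<in>A. Q x)} \<le> card {x \<in> B. Q x} * card B ^ (k - 1)"
proof -
  define S where "S = {A. A \<subseteq> B \<and> card A = k - 1}"
  have "finite S"
    unfolding S_def using assms by simp
  have "{A. A \<subseteq> B \<and> card A = k \<and> (\<exists>x\<in>A. Q x)} \<subseteq> (\<Union>x\<in>{x \<in> B. Q x}. insert x ` S)"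
  proof
    fix A assume "A \<in> {A. A \<subseteq> B \<and> card A = k \<and> (\<exists>x\<in>A. Q x)}"
    then obtain x where A: "A \<subseteq> B" "card A = k" "x \<in> A" "Q x"
      by blast
    then have "A - {x} \<in> S" "A = insert x (A - {x})"
      using assms finite_subset unfolding S_def by auto
    then show "A \<in> (\<Union>x\<in>{x \<in> B. Q x}. insert x ` S)"
      using A by blast
  qed
  then have "card {A. A \<subseteq> B \<and> card A = k \<and> (\<exists>x\<in>A. Q x)} \<le> card (\<Union>x\<in>{x \<in> B. Q x}. insert x ` S)"
    using assms \<open>finite S\<close> by (intro card_mono) auto
  also have "\<dots> \<le> (\<Sum>x\<in>{x \<in> B. Q x}. card (insert x ` S))"
    using assms by (intro card_UN_le) simp
  also have "\<dots> \<le> (\<Sum>x\<in>{x \<in> B. Q x}. card B ^ (k - 1))"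
  proof (rule sum_mono)
    fix x
    have "card (insert x ` S) \<le> card B choose (k - 1)"
      using card_image_le[OF \<open>finite S\<close>] n_subsets[OF assms] unfolding S_def by metis
    also have "\<dots> \<le> card B ^ (k - 1)"
      by (cases "k - 1 \<le> card B") (simp_all add: binomial_le_pow binomial_eq_0)
    finally show "card (insert x ` S) \<le> card B ^ (k - 1)" .
  qed
  finally show ?thesis by simp
qed

theorem lemma2:
  fixes q k :: nat
  assumes "prime q"
  shows "\<exists>C::real. C > 0 \<and> (\<forall>N::nat.
    real (card {A. A \<subseteq> mult_box N \<and> card A = k \<and> (\<exists>x\<in>A. perfect_power q x)})
      \<le> C * real N ^ (N * k) / real q ^ N)"
proof (intro exI conjI allI)
  define C :: real where "C = 2 * exp (real q) * (2 * exp 1) ^ (k - 1)"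
  show "C > 0" unfolding C_def by simp
  fix N :: nat
  have q_pos: "q > 0" using assms prime_gt_0_nat by simp
  let ?S = "{A. A \<subseteq> mult_box N \<and> card A = k \<and> (\<exists>x\<in>A. perfect_power q x)}"
  show "real (card ?S) \<le> C * real N ^ (N * k) / real q ^ N"
  proof (cases "k = 0")
    case True
    then have "?S = {}"
      using finite_mult_box by (auto dest: finite_subset)
    then have "card ?S = 0"
      by (metis card.empty)
    then show ?thesis
      unfolding C_def by simp
  next
    case False
    have "real (card ?S) \<le> real (card {x \<in> mult_box N. perfect_power q x}) * real (card (mult_box N)) ^ (k - 1)"
      using card_subsets_with_witness_le[OF finite_mult_box, where k = k and Q = "perfect_power q"]
      by (simp flip: of_nat_power of_nat_mult)
    also have "\<dots> \<le> (2 * exp (real q) * real N ^ N / real q ^ N) * (2 * exp 1 * real N ^ N) ^ (k - 1)"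
      by (intro mult_mono power_mono card_perfect_powers_in_mult_box_le card_mult_box_le q_pos) auto
    also have "\<dots> = C * real N ^ (N + N * (k - 1)) / real q ^ N"
      unfolding C_def by (simp add: power_mult_distrib power_add power_mult)
    also have "N + N * (k - 1) = N * k"
      using False by (cases k) simp_all
    finally show ?thesis .
  qed
qed

end
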